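(* Let $\Phi$ be a real, additive gain graph on $\{1,\dots,n\}$ and let $\mathbf{Q}=(Q_1,\dots,Q_n)\in(\mathbb{E}^d)^n$ with $Q_i\neq Q_j$ whenever $i$ and $j$ are adjacent in $\Phi$. Let $C$ be a circle in $\Phi$ and let $\mathcal{C}=\{h(e):e\in C\}\subseteq\mathcal{H}(\Phi;\mathbf{Q})$. If $C$ is unbalanced, then $\bigcap\mathcal{C}=\emptyset$. If $C$ is balanced and $e\in C$, then $\bigcap\mathcal{C}=\bigcap(\mathcal{C}\setminus\{h(e)\})$.
   Context: $\mathbb{E}^d$ is Euclidean $d$-space with distance $d(\cdot,\cdot)$; $\psi_{ij}(P)=d(P,Q_i)^2-d(P,Q_j)^2$. A real, additive gain graph $\Phi$ on vertex set $\{1,\dots,n\}$ is a finite graph (multiple edges allowed, every edge with two distinct endpoints) with gains $\phi(e;i,j)\in\mathbb{R}$ for each edge $e$ with endpoints $i,j$, satisfying $\phi(e;j,i)=-\phi(e;i,j)$. A circle is a simple closed path; it is balanced if the sum of its gains, read in a consistent direction, is $0$. The Pythagorean arrangement $\mathcal{H}(\Phi;\mathbf{Q})$ consists of the hyperplanes $h(e)=\{P:\psi_{ij}(P)=\phi(e;i,j)\}$, one for each edge $e$ with endpoints $i,j$. *)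

theory Defs
  imports "HOL-Analysis.Analysis"
begin

text \<open>A real additive gain graph on vertex set {1..n}: a finite edge set E (edges are
abstract identifiers, so multiple edges are allowed), each edge e with a reference
orientation ends e = (i,j), i \<noteq> j, and gain g e = phi(e;i,j).\<close>

definition gain_graph :: "nat \<Rightarrow> 'e set \<Rightarrow> ('e \<Rightarrow> nat \<times> nat) \<Rightarrow> bool" where
  "gain_graph n E ends \<longleftrightarrow> finite E \<and>
     (\<forall>e\<in>E. fst (ends e) \<in> {1..n} \<and> snd (ends e) \<in> {1..n} \<and> fst (ends e) \<noteq> snd (ends e))"

definition gain :: "('e \<Rightarrow> nat \<times> nat) \<Rightarrow> ('e \<Rightarrow> real) \<Rightarrow> 'e \<Rightarrow> nat \<Rightarrow> nat \<Rightarrow> real" where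
  "gain ends g e i j = (if ends e = (i, j) then g e else - g e)"

definition adjacent :: "'e set \<Rightarrow> ('e \<Rightarrow> nat \<times> nat) \<Rightarrow> nat \<Rightarrow> nat \<Rightarrow> bool" where
  "adjacent E ends i j \<longleftrightarrow> (\<exists>e\<in>E. ends e = (i, j) \<or> ends e = (j, i))"

definition circle :: "'e set \<Rightarrow> ('e \<Rightarrow> nat \<times> nat) \<Rightarrow> nat list \<Rightarrow> 'e list \<Rightarrow> bool" where
  "circle E ends vs es \<longleftrightarrow> length vs = length es \<and> length es \<ge> 2 \<and>
     distinct vs \<and> distinct es \<and> set es \<subseteq> E \<and>
     (\<forall>m < length es. ends (es ! m) = (vs ! m, vs ! ((m + 1) mod length es)) \<or>
                      ends (es ! m) = (vs ! ((m + 1) mod length es), vs ! m))"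

definition balanced :: "('e \<Rightarrow> nat \<times> nat) \<Rightarrow> ('e \<Rightarrow> real) \<Rightarrow> nat list \<Rightarrow> 'e list \<Rightarrow> bool" where
  "balanced ends g vs es \<longleftrightarrow>
     (\<Sum>m < length es. gain ends g (es ! m) (vs ! m) (vs ! ((m + 1) mod length es))) = 0"

definition psi :: "(nat \<Rightarrow> 'a::euclidean_space) \<Rightarrow> nat \<Rightarrow> nat \<Rightarrow> 'a \<Rightarrow> real" where
  "psi Q i j P = (dist P (Q i))\<^sup>2 - (dist P (Q j))\<^sup>2"

definition hyp :: "(nat \<Rightarrow> 'a::euclidean_space) \<Rightarrow> ('e \<Rightarrow> nat \<times> nat) \<Rightarrow> ('e \<Rightarrow> real) \<Rightarrow> 'e \<Rightarrow> 'a set" where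
  "hyp Q ends g e = {P. psi Q (fst (ends e)) (snd (ends e)) P = gain ends g e (fst (ends e)) (snd (ends e))}"

end

theory Submission
  imports Defs
begin

text \<open>Along a circle \<open>v\<^sub>0 \<dots> v\<^sub>k\<^sub>-\<^sub>1\<close> the left-hand sides
  \<open>d(P,Q\<^sub>v\<^sub>m)\<^sup>2 - d(P,Q\<^sub>v\<^sub>m\<^sub>+\<^sub>1)\<^sup>2\<close> of the equations of the hyperplanes \<open>h(e\<^sub>m)\<close> telescope
  to \<open>0\<close> for every point \<open>P\<close>, while their right-hand sides add up to the gain of the circle.
  Hence a common point forces the circle to be balanced, and on a balanced circle each of the
  equations is implied by the others.\<close>

lemma sum_cyclic_differences:
  fixes f :: "nat \<Rightarrow> 'a::ab_group_add"
  assumes "k > 0"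
  shows "(\<Sum>m<k. f m - f ((m + 1) mod k)) = 0"
proof -
  obtain k' where k: "k = Suc k'" using assms by (cases k) auto
  have "(\<Sum>m<k. f ((m + 1) mod k)) = (\<Sum>m<k'. f (Suc m)) + f 0"
    using k by simp
  also have "\<dots> = (\<Sum>m<k. f m)"
    unfolding k by (simp only: sum.lessThan_Suc_shift add.commute)
  finally show ?thesis by (simp add: sum_subtractf)
qed

lemma psi_swap: "psi Q j i P = - psi Q i j P"
  by (simp add: psi_def)

lemma mem_hyp_iff:
  assumes "ends e = (i, j) \<or> ends e = (j, i)" and "i \<noteq> j"
  shows "P \<in> hyp Q ends g e \<longleftrightarrow> psi Q i j P = gain ends g e i j"
  using assms(1)
proof
  assume "ends e = (i, j)"
  then show ?thesis
    by (simp add: hyp_def)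
next
  assume "ends e = (j, i)"
  with assms(2) show ?thesis
    by (auto simp: hyp_def gain_def psi_swap[of Q j i])
qed

lemma circle_consecutive_distinct:
  assumes "circle E ends vs es" and "m < length es"
  shows "vs ! m \<noteq> vs ! ((m + 1) mod length es)"
proof -
  have "length vs = length es" "length es \<ge> 2" "distinct vs"
    using assms(1) by (auto simp: circle_def)
  moreover have "m \<noteq> (m + 1) mod length es"
    using assms(2) \<open>length es \<ge> 2\<close> by (cases "m + 1 = length es") auto
  moreover have "(m + 1) mod length es < length es"
    using assms(2) by (intro mod_less_divisor) linarith
  ultimately show ?thesis
    using assms(2) by (simp add: nth_eq_iff_index_eq)
qed

lemma circle_mem_hyp_iff:
  assumes "circle E ends vs es" and "m < length es"
  shows "P \<in> hyp Q ends g (es ! m) \<longleftrightarrow>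
    psi Q (vs ! m) (vs ! ((m + 1) mod length es)) P =
    gain ends g (es ! m) (vs ! m) (vs ! ((m + 1) mod length es))"
  using assms circle_consecutive_distinct[OF assms]
  by (intro mem_hyp_iff) (auto simp: circle_def)

lemma sum_psi_around_cycle:
  assumes "k > 0"
  shows "(\<Sum>m<k. psi Q (vs ! m) (vs ! ((m + 1) mod k)) P) = 0"
  using sum_cyclic_differences[OF assms, of "\<lambda>m. (dist P (Q (vs ! m)))\<^sup>2"]
  by (simp add: psi_def)

lemma eq_if_others_eq_and_sums_eq:
  fixes a b :: "'i \<Rightarrow> 'a::ab_group_add"
  assumes "finite I" and "j \<in> I" and "sum a I = sum b I"
    and "\<forall>i\<in>I - {j}. a i = b i"
  shows "a j = b j"
proof -
  have "sum a (I - {j}) = sum b (I - {j})"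
    using assms(4) by (intro sum.cong) auto
  with assms(3) show ?thesis
    using sum.remove[OF assms(1,2), of a] sum.remove[OF assms(1,2), of b] by simp
qed

lemma circle_common_point_imp_balanced:
  assumes "circle E ends vs es" and "\<forall>f\<in>set es. P \<in> hyp Q ends g f"
  shows "balanced ends g vs es"
proof -
  let ?k = "length es"
  let ?psi = "\<lambda>m. psi Q (vs ! m) (vs ! ((m + 1) mod ?k)) P"
  let ?gain = "\<lambda>m. gain ends g (es ! m) (vs ! m) (vs ! ((m + 1) mod ?k))"
  have "?k > 0"
    using assms(1) by (auto simp: circle_def)
  have "?psi m = ?gain m" if "m < ?k" for m
  proof -
    have "P \<in> hyp Q ends g (es ! m)"
      using assms(2) that by simp
    then show ?thesis
      using circle_mem_hyp_iff[OF assms(1) that, of P Q g] by simp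
  qed
  then have "sum ?psi {..<?k} = sum ?gain {..<?k}"
    by (intro sum.cong) auto
  moreover have "sum ?psi {..<?k} = 0"
    using \<open>?k > 0\<close> by (rule sum_psi_around_cycle)
  ultimately show ?thesis
    by (simp add: balanced_def)
qed

lemma balanced_circle_hyp_redundant:
  assumes "circle E ends vs es" and "balanced ends g vs es" and "j < length es"
    and "\<forall>f\<in>set es - {es ! j}. P \<in> hyp Q ends g f"
  shows "P \<in> hyp Q ends g (es ! j)"
proof -
  let ?k = "length es"
  let ?psi = "\<lambda>m. psi Q (vs ! m) (vs ! ((m + 1) mod ?k)) P"
  let ?gain = "\<lambda>m. gain ends g (es ! m) (vs ! m) (vs ! ((m + 1) mod ?k))"
  have "?k > 0" and "distinct es"
    using assms(1) by (auto simp: circle_def)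
  have "?psi m = ?gain m" if "m \<in> {..<?k} - {j}" for m
  proof -
    have "m < ?k" and "m \<noteq> j"
      using that by auto
    then have "es ! m \<noteq> es ! j"
      using assms(3) \<open>distinct es\<close> by (simp add: nth_eq_iff_index_eq)
    with \<open>m < ?k\<close> assms(4) have "P \<in> hyp Q ends g (es ! m)"
      by simp
    then show ?thesis
      using circle_mem_hyp_iff[OF assms(1) \<open>m < ?k\<close>, of P Q g] by simp
  qed
  moreover have "sum ?psi {..<?k} = sum ?gain {..<?k}"
    using sum_psi_around_cycle[OF \<open>?k > 0\<close>] assms(2) by (simp add: balanced_def)
  ultimately have "?psi j = ?gain j"
    using assms(3) eq_if_others_eq_and_sums_eq[of "{..<?k}" j ?psi ?gain] by simp
  then show ?thesis
    using circle_mem_hyp_iff[OF assms(1,3), of P Q g] by simp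
qed

text \<open>The first two hypotheses only make the \<open>h(e)\<close> genuine hyperplanes; the set identities
  hold without them.\<close>

theorem lemma5p2:
  fixes n :: nat and E :: "'e set" and ends :: "'e \<Rightarrow> nat \<times> nat" and g :: "'e \<Rightarrow> real"
    and Q :: "nat \<Rightarrow> 'a::euclidean_space" and vs :: "nat list" and es :: "'e list"
  assumes "gain_graph n E ends"
    and "\<And>i j. adjacent E ends i j \<Longrightarrow> Q i \<noteq> Q j"
    and "circle E ends vs es"
  shows "(\<not> balanced ends g vs es \<longrightarrow> (\<Inter>f\<in>set es. hyp Q ends g f) = {})
       \<and> (balanced ends g vs es \<longrightarrow>
           (\<forall>e\<in>set es. (\<Inter>f\<in>set es - {e}. hyp Q ends g f) = (\<Inter>f\<in>set es. hyp Q ends g f)))"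
proof -
  have "(\<Inter>f\<in>set es. hyp Q ends g f) = {}" if "\<not> balanced ends g vs es"
    using circle_common_point_imp_balanced[OF assms(3)] that by blast
  moreover have "(\<Inter>f\<in>set es - {e}. hyp Q ends g f) = (\<Inter>f\<in>set es. hyp Q ends g f)"
    if "balanced ends g vs es" and "e \<in> set es" for e
  proof -
    obtain j where "j < length es" and "e = es ! j"
      using \<open>e \<in> set es\<close> by (auto simp: in_set_conv_nth)
    then have "(\<Inter>f\<in>set es - {e}. hyp Q ends g f) \<subseteq> hyp Q ends g e"
      using balanced_circle_hyp_redundant[OF assms(3) that(1)] by blast
    moreover have "set es = insert e (set es - {e})"
      using \<open>e \<in> set es\<close> by blast
    ultimately show ?thesis
      by (metis INT_insert Int_absorb1)
  qed
  ultimately show ?thesis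
    by blast
qed

end
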